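(* Let $n\ge 2$ and let $\mathbf d_n=(d_1,d_2,\ldots,d_n)$ be a nonincreasing sequence of nonnegative integers. Then $\mathbf d_n$ is the degree sequence of some Toeplitz graph on $n$ vertices if and only if there is a permutation $\pi$ of $[n]$ such that, writing $m=\lfloor (n-1)/2\rfloor$ and letting $s$ be the number of indices $i\in\{1,\ldots,m\}$ with $d_{\pi(i+1)}\ne d_{\pi(i)}$: (a) $|d_{\pi(i+1)}-d_{\pi(i)}|\le 1$ for every $i\in[n-1]$; (b) $d_{\pi(i)}=d_{\pi(n-i+1)}$ for every $i\in[n]$; (c) $s\le d_{\pi(1)}\le n-1-s$; (d) if $n$ is odd, then $d_{\pi(1)}$ and $s$ have the same parity.
   Context: A Toeplitz graph on $n$ vertices is a simple graph whose adjacency matrix is a symmetric $(0,1)$ Toeplitz matrix with zero diagonal; equivalently, for some $k\ge 0$ and integers $1\le t_1<\cdots<t_k\le n-1$, it is the graph $G_n\langle t_1,\ldots,t_k\rangle$ on vertex set $[n]$ in which distinct $i,j$ are adjacent iff $|i-j|\in\{t_1,\ldots,t_k\}$ (with $k=0$ giving the edgeless graph). The degree sequence of a graph is the nonincreasing sequence of its vertex degrees. *)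

theory Defs
  imports Main "HOL-Combinatorics.Permutations"
begin

definition toeplitz_adj :: "nat \<Rightarrow> nat set \<Rightarrow> nat \<Rightarrow> nat \<Rightarrow> bool" where
  "toeplitz_adj n T i j \<longleftrightarrow>
     i \<in> {1..n} \<and> j \<in> {1..n} \<and> i \<noteq> j \<and> nat \<bar>int i - int j\<bar> \<in> T"

definition toeplitz_degree :: "nat \<Rightarrow> nat set \<Rightarrow> nat \<Rightarrow> nat" where
  "toeplitz_degree n T i = card {j \<in> {1..n}. toeplitz_adj n T i j}"

definition toeplitz_degree_sequence :: "nat \<Rightarrow> nat set \<Rightarrow> nat list" where
  "toeplitz_degree_sequence n T = rev (sort (map (toeplitz_degree n T) [1..<n+1]))"

definition is_toeplitz_degree_sequence :: "nat \<Rightarrow> nat list \<Rightarrow> bool" where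
  "is_toeplitz_degree_sequence n d \<longleftrightarrow>
     (\<exists>T. T \<subseteq> {1..n-1} \<and> d = toeplitz_degree_sequence n T)"

end

theory Submission
  imports Defs
begin

text \<open>Vertex \<open>i\<close> of \<open>G\<^sub>n\<langle>T\<rangle>\<close> has degree \<open>|{t \<in> T. t < i}| + |{t \<in> T. i + t \<le> n}|\<close>. Hence the degree of
  vertex 1 is \<open>|T|\<close>, degrees are symmetric under \<open>i \<mapsto> n + 1 - i\<close>, and passing from \<open>i\<close> to \<open>i + 1\<close>
  changes the degree by \<open>[i \<in> T] - [n - i \<in> T]\<close>. Grouping \<open>{1..n-1}\<close> into the pairs \<open>{i, n - i}\<close>
  with \<open>i \<le> m\<close> and (for even \<open>n\<close>) the middle element \<open>n/2\<close>, the number \<open>s\<close> of degree changes on the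
  first half counts the pairs met by \<open>T\<close> exactly once; counting pairs met once and twice gives
  (c) and (d). Conversely, a profile satisfying (a)-(d) is realised by taking \<open>i\<close> where it rises,
  \<open>n - i\<close> where it falls, whole pairs at \<open>(D 1 - s) div 2\<close> flat positions and \<open>n/2\<close> if \<open>D 1 - s\<close>
  is odd. The permutation \<open>\<pi>\<close> merely matches the sorted list with the degrees in vertex order.\<close>

lemma toeplitz_neighbours:
  assumes "T \<subseteq> {1..n-1}" and "i \<in> {1..n}"
  shows "{j \<in> {1..n}. toeplitz_adj n T i j}
    = (\<lambda>t. i - t) ` {t \<in> T. t < i} \<union> (\<lambda>t. i + t) ` {t \<in> T. i + t \<le> n}"
proof (intro set_eqI iffI)
  fix j assume "j \<in> {j \<in> {1..n}. toeplitz_adj n T i j}"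
  then have j: "j \<in> {1..n}" "j \<noteq> i" "nat \<bar>int i - int j\<bar> \<in> T"
    by (auto simp: toeplitz_adj_def)
  show "j \<in> (\<lambda>t. i - t) ` {t \<in> T. t < i} \<union> (\<lambda>t. i + t) ` {t \<in> T. i + t \<le> n}"
  proof (cases "j < i")
    case True
    with j have "i - j \<in> {t \<in> T. t < i}" "j = i - (i - j)" by (auto simp: nat_minus_as_int)
    then show ?thesis by blast
  next
    case False
    with j have "j - i \<in> {t \<in> T. i + t \<le> n}" "j = i + (j - i)" by (auto simp: nat_minus_as_int)
    then show ?thesis by blast
  qed
qed (use assms in \<open>fastforce simp: toeplitz_adj_def\<close>)+

lemma toeplitz_degree_eq:
  assumes "T \<subseteq> {1..n-1}" and "i \<in> {1..n}"
  shows "toeplitz_degree n T i = card {t \<in> T. t < i} + card {t \<in> T. i + t \<le> n}"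
proof -
  have "finite T" using assms(1) finite_subset by blast
  moreover have "(\<lambda>t. i - t) ` {t \<in> T. t < i} \<inter> (\<lambda>t. i + t) ` {t \<in> T. i + t \<le> n} = {}"
    using assms(1) by fastforce
  moreover have "inj_on (\<lambda>t. i - t) {t \<in> T. t < i}" by (rule inj_onI) auto
  ultimately show ?thesis
    unfolding toeplitz_degree_def toeplitz_neighbours[OF assms]
    by (simp add: card_Un_disjoint card_image)
qed

lemma card_Collect_or_eq:
  assumes "finite A"
  shows "card {x \<in> A. P x \<or> x = a} = card {x \<in> A. P x} + of_bool (a \<in> A \<and> \<not> P a)"
proof (cases "a \<in> A \<and> \<not> P a")
  case True
  then have "{x \<in> A. P x \<or> x = a} = insert a {x \<in> A. P x}" by auto
  with True assms show ?thesis by simp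
next
  case False
  then have "{x \<in> A. P x \<or> x = a} = {x \<in> A. P x}" by auto
  with False show ?thesis by simp
qed

lemma toeplitz_degree_Suc:
  assumes "T \<subseteq> {1..n-1}" and "1 \<le> i" "i < n"
  shows "int (toeplitz_degree n T (Suc i))
    = int (toeplitz_degree n T i) + of_bool (i \<in> T) - of_bool (n - i \<in> T)"
proof -
  have "finite T" using assms(1) finite_subset by blast
  moreover have "{t \<in> T. t < Suc i} = {t \<in> T. t < i \<or> t = i}"
    and "{t \<in> T. i + t \<le> n} = {t \<in> T. Suc i + t \<le> n \<or> t = n - i}"
    using assms(3) by auto
  ultimately show ?thesis
    using assms toeplitz_degree_eq[OF assms(1), of i] toeplitz_degree_eq[OF assms(1), of "Suc i"]
    by (auto simp: card_Collect_or_eq)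
qed

lemma toeplitz_degree_1:
  assumes "T \<subseteq> {1..n-1}"
  shows "toeplitz_degree n T 1 = card T"
proof (cases "n = 0")
  case True
  with assms show ?thesis by (simp add: toeplitz_degree_def)
next
  case False
  from assms have "{t \<in> T. t < 1} = {}" and "{t \<in> T. 1 + t \<le> n} = T" by fastforce+
  with False toeplitz_degree_eq[OF assms, of 1] show ?thesis by simp
qed

lemma toeplitz_degree_mirror:
  assumes "T \<subseteq> {1..n-1}" and "i \<in> {1..n}"
  shows "toeplitz_degree n T (n - i + 1) = toeplitz_degree n T i"
proof -
  from assms(2) have "{t \<in> T. t < n - i + 1} = {t \<in> T. i + t \<le> n}"
    and "{t \<in> T. n - i + 1 + t \<le> n} = {t \<in> T. t < i}"
    by auto
  moreover from assms(2) have "n - i + 1 \<in> {1..n}" by auto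
  ultimately show ?thesis
    using toeplitz_degree_eq[OF assms] toeplitz_degree_eq[OF assms(1), of "n - i + 1"] by simp
qed

lemma toeplitz_degree_eqI:
  assumes T: "T \<subseteq> {1..n-1}"
    and D1: "D 1 = card T"
    and step: "\<And>i. 1 \<le> i \<Longrightarrow> i < n \<Longrightarrow>
      int (D (Suc i)) = int (D i) + of_bool (i \<in> T) - of_bool (n - i \<in> T)"
    and i: "i \<in> {1..n}"
  shows "toeplitz_degree n T i = D i"
  using i
proof (induction i)
  case (Suc i)
  show ?case
  proof (cases "i = 0")
    case True
    then show ?thesis using toeplitz_degree_1[OF T] D1 by simp
  next
    case False
    with Suc.prems have "1 \<le> i" "i < n" by auto
    with Suc.IH toeplitz_degree_Suc[OF T this] step[OF this] show ?thesis by simp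
  qed
qed simp

lemma eq_on_half_if_antisymmetric:
  fixes f g :: "nat \<Rightarrow> int"
  assumes f: "\<And>i. i \<in> {1..n-1} \<Longrightarrow> f (n - i) = - f i"
    and g: "\<And>i. i \<in> {1..n-1} \<Longrightarrow> g (n - i) = - g i"
    and half: "\<And>i. i \<in> {1..(n - 1) div 2} \<Longrightarrow> f i = g i"
    and i: "i \<in> {1..n-1}"
  shows "f i = g i"
proof -
  consider "i \<le> (n - 1) div 2" | "n - i \<le> (n - 1) div 2" | "n - i = i"
    by linarith
  then show ?thesis
  proof cases
    case 2
    with i have "n - i \<in> {1..(n - 1) div 2}" and "n - (n - i) = i" by auto
    with f[of "n - i"] g[of "n - i"] half[of "n - i"] show ?thesis by auto
  next
    case 3
    with f[OF i] g[OF i] show ?thesis by simp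
  qed (use i half in auto)
qed

lemma card_split_mirror_pairs:
  fixes n m :: nat
  assumes T: "T \<subseteq> {1..n-1}" and m: "m = (n - 1) div 2"
  shows "card T = card (T \<inter> {1..m}) + card {i \<in> {1..m}. n - i \<in> T} + card (T \<inter> {m<..<n-m})"
proof -
  have bounds: "2 * m \<le> n - 1" "n - 1 \<le> 2 * m + 1" using m by auto
  have T_eq: "T = (T \<inter> {1..m} \<union> T \<inter> {m<..<n-m}) \<union> (\<lambda>i. n - i) ` {i \<in> {1..m}. n - i \<in> T}"
  proof (intro set_eqI iffI)
    fix t assume t: "t \<in> T"
    show "t \<in> (T \<inter> {1..m} \<union> T \<inter> {m<..<n-m}) \<union> (\<lambda>i. n - i) ` {i \<in> {1..m}. n - i \<in> T}"
    proof (cases "n - m \<le> t")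
      case True
      moreover from t T have "1 \<le> t" "t \<le> n - 1" by auto
      ultimately have "n - t \<in> {i \<in> {1..m}. n - i \<in> T}" "t = n - (n - t)" using t bounds by auto
      then show ?thesis by blast
    qed (use t T in auto)
  qed auto
  have "inj_on (\<lambda>i. n - i) {i \<in> {1..m}. n - i \<in> T}"
    using bounds by (intro inj_onI) auto
  moreover have "(T \<inter> {1..m} \<union> T \<inter> {m<..<n-m}) \<inter> (\<lambda>i. n - i) ` {i \<in> {1..m}. n - i \<in> T} = {}"
    using bounds by auto
  moreover have "finite T" using T finite_subset by blast
  ultimately show ?thesis
    by (subst T_eq) (simp add: card_Un_disjoint card_image Int_Un_distrib2 disjoint_iff)
qed

lemma split_mirror_pairs_of_union:
  fixes n m :: nat
  assumes m: "m = (n - 1) div 2"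
    and L: "L \<subseteq> {1..m}" and R: "R \<subseteq> {1..m}" and M: "M \<subseteq> {m<..<n-m}"
  defines "T \<equiv> L \<union> (\<lambda>i. n - i) ` R \<union> M"
  shows "T \<subseteq> {1..n-1}" and "T \<inter> {1..m} = L" and "{i \<in> {1..m}. n - i \<in> T} = R"
    and "T \<inter> {m<..<n-m} = M"
proof -
  have bounds: "2 * m \<le> n - 1" "n - 1 \<le> 2 * m + 1" using m by auto
  then show "T \<subseteq> {1..n-1}" "T \<inter> {1..m} = L" "T \<inter> {m<..<n-m} = M"
    using L R M unfolding T_def by fastforce+
  have "inj_on (\<lambda>i. n - i) {1..m}" using bounds by (intro inj_onI) auto
  then have "n - i \<in> (\<lambda>i. n - i) ` R \<longleftrightarrow> i \<in> R" if "i \<in> {1..m}" for i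
    using that R by (rule inj_on_image_mem_iff)
  then show "{i \<in> {1..m}. n - i \<in> T} = R"
    using bounds L R M unfolding T_def by fastforce
qed

lemma card_sym_diff_add:
  assumes "finite A" and "finite B"
  shows "card A + card B + card ((A - B) \<union> (B - A)) = 2 * card (A \<union> B)"
proof -
  have "A \<union> B = ((A - B) \<union> (B - A)) \<union> (A \<inter> B)" by blast
  also have "card \<dots> = card ((A - B) \<union> (B - A)) + card (A \<inter> B)"
    by (rule card_Un_disjoint) (use assms in auto)
  finally have "card (A \<union> B) = card ((A - B) \<union> (B - A)) + card (A \<inter> B)" .
  with card_Un_Int[OF assms] show ?thesis by simp
qed

lemma card_unpaired_bounds:
  fixes n m :: nat
  assumes T: "T \<subseteq> {1..n-1}" and m: "m = (n - 1) div 2"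
  defines "S \<equiv> {i \<in> {1..m}. (i \<in> T) \<noteq> (n - i \<in> T)}"
  shows "card S \<le> card T" and "card T + card S \<le> n - 1"
    and "odd n \<Longrightarrow> even (card T + card S)"
proof -
  define L where "L = T \<inter> {1..m}"
  define R where "R = {i \<in> {1..m}. n - i \<in> T}"
  define M where "M = T \<inter> {m<..<n-m}"
  have "S = (L - R) \<union> (R - L)" by (auto simp: S_def L_def R_def)
  then have LRS: "card L + card R + card S = 2 * card (L \<union> R)"
    by (simp add: card_sym_diff_add L_def R_def)
  have T_eq: "card T = card L + card R + card M"
    using card_split_mirror_pairs[OF T m] by (simp add: L_def R_def M_def)
  have "card (L \<union> R) \<le> card {1..m}" by (rule card_mono) (auto simp: L_def R_def)
  moreover have M_le: "card M \<le> card {m<..<n-m}" by (rule card_mono) (auto simp: M_def)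
  moreover have "card (L \<union> R) \<le> card L + card R" by (rule card_Un_le)
  moreover have "2 * m \<le> n - 1" by (simp add: m)
  ultimately show "card S \<le> card T" "card T + card S \<le> n - 1"
    using LRS T_eq by auto
  assume "odd n"
  then have "card {m<..<n-m} = 0" unfolding m by (auto elim!: oddE)
  with M_le LRS T_eq show "even (card T + card S)" by simp
qed

definition toeplitz_profile :: "nat \<Rightarrow> (nat \<Rightarrow> nat) \<Rightarrow> bool" where
  "toeplitz_profile n D \<longleftrightarrow>
    (let m = (n - 1) div 2;
         s = card {i \<in> {1..m}. D (i + 1) \<noteq> D i}
     in (\<forall>i \<in> {1..n-1}. \<bar>int (D (i + 1)) - int (D i)\<bar> \<le> 1) \<and>
        (\<forall>i \<in> {1..n}. D i = D (n - i + 1)) \<and>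
        s \<le> D 1 \<and> D 1 \<le> n - 1 - s \<and>
        (odd n \<longrightarrow> (even (D 1) \<longleftrightarrow> even s)))"

lemma toeplitz_profile_cong:
  assumes "n \<ge> 1" and "\<And>i. i \<in> {1..n} \<Longrightarrow> D i = D' i"
  shows "toeplitz_profile n D = toeplitz_profile n D'"
proof -
  have steps: "D i = D' i \<and> D (i + 1) = D' (i + 1)" if "i \<in> {1..n-1}" for i
    using that assms(2) by auto
  moreover have "i \<in> {1..n-1}" if "i \<in> {1..(n - 1) div 2}" for i
    using that by auto
  ultimately have "{i \<in> {1..(n - 1) div 2}. D (i + 1) \<noteq> D i} = {i \<in> {1..(n - 1) div 2}. D' (i + 1) \<noteq> D' i}"
    by metis
  moreover have "(\<forall>i \<in> {1..n-1}. \<bar>int (D (i + 1)) - int (D i)\<bar> \<le> 1) \<longleftrightarrow>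
      (\<forall>i \<in> {1..n-1}. \<bar>int (D' (i + 1)) - int (D' i)\<bar> \<le> 1)"
    using steps by simp
  moreover have "(\<forall>i \<in> {1..n}. D i = D (n - i + 1)) \<longleftrightarrow> (\<forall>i \<in> {1..n}. D' i = D' (n - i + 1))"
    using assms(2) by (auto 0 3)
  moreover have "D 1 = D' 1" using assms by simp
  ultimately show ?thesis unfolding toeplitz_profile_def Let_def by simp
qed

lemma toeplitz_profile_degree:
  assumes T: "T \<subseteq> {1..n-1}"
  shows "toeplitz_profile n (toeplitz_degree n T)"
proof -
  let ?D = "toeplitz_degree n T"
  define m where "m = (n - 1) div 2"
  have step: "int (?D (i + 1)) - int (?D i) = of_bool (i \<in> T) - of_bool (n - i \<in> T)"
    if "i \<in> {1..n-1}" for i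
    using toeplitz_degree_Suc[OF T, of i] that by auto
  have "?D (i + 1) \<noteq> ?D i \<longleftrightarrow> (i \<in> T) \<noteq> (n - i \<in> T)" if "i \<in> {1..m}" for i
  proof -
    from that have "i \<in> {1..n-1}" by (auto simp: m_def)
    from step[OF this] show ?thesis by (cases "i \<in> T"; cases "n - i \<in> T") auto
  qed
  then have changes: "{i \<in> {1..m}. ?D (i + 1) \<noteq> ?D i} = {i \<in> {1..m}. (i \<in> T) \<noteq> (n - i \<in> T)}"
    by blast
  have "\<forall>i \<in> {1..n-1}. \<bar>int (?D (i + 1)) - int (?D i)\<bar> \<le> 1"
    using step by simp
  moreover have "\<forall>i \<in> {1..n}. ?D i = ?D (n - i + 1)"
    using toeplitz_degree_mirror[OF T] by simp
  ultimately show ?thesis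
    using card_unpaired_bounds[OF T m_def] toeplitz_degree_1[OF T]
    unfolding toeplitz_profile_def Let_def m_def[symmetric] changes by auto
qed

lemma indicator_diff_representation:
  fixes \<delta> :: "'a \<Rightarrow> int"
  assumes I: "finite I" and unit: "\<forall>i \<in> I. \<bar>\<delta> i\<bar> \<le> 1"
    and k: "k + card {i \<in> I. \<delta> i \<noteq> 0} \<le> card I"
  shows "\<exists>L R. L \<subseteq> I \<and> R \<subseteq> I \<and> card L + card R = card {i \<in> I. \<delta> i \<noteq> 0} + 2 * k \<and>
    (\<forall>i \<in> I. \<delta> i = of_bool (i \<in> L) - of_bool (i \<in> R))"
proof -
  define Up where "Up = {i \<in> I. \<delta> i > 0}"
  define Down where "Down = {i \<in> I. \<delta> i < 0}"
  have fin: "finite Up" "finite Down" "finite {i \<in> I. \<delta> i = 0}" using I by (simp_all add: Up_def Down_def)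
  have "{i \<in> I. \<delta> i \<noteq> 0} = Up \<union> Down" "Up \<inter> Down = {}" by (auto simp: Up_def Down_def)
  then have changes: "card {i \<in> I. \<delta> i \<noteq> 0} = card Up + card Down"
    using fin by (simp add: card_Un_disjoint)
  have "card I = card {i \<in> I. \<delta> i = 0} + card {i \<in> I. \<delta> i \<noteq> 0}"
    using I by (subst card_Un_disjoint[symmetric]) (auto intro: arg_cong[where f = card])
  with k obtain K where K: "K \<subseteq> {i \<in> I. \<delta> i = 0}" "card K = k"
    using obtain_subset_with_card_n[of k "{i \<in> I. \<delta> i = 0}"] by auto
  have "finite K" using K(1) fin(3) finite_subset by blast
  moreover have "Up \<inter> K = {}" "Down \<inter> K = {}" using K(1) by (auto simp: Up_def Down_def)
  ultimately have "card (Up \<union> K) + card (Down \<union> K) = card {i \<in> I. \<delta> i \<noteq> 0} + 2 * k"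
    using fin K(2) changes by (simp add: card_Un_disjoint)
  moreover have "\<delta> i = of_bool (i \<in> Up \<union> K) - of_bool (i \<in> Down \<union> K)" if "i \<in> I" for i
    using unit that K(1) by (auto simp: Up_def Down_def abs_le_iff)
  moreover have "Up \<union> K \<subseteq> I" "Down \<union> K \<subseteq> I" using K(1) by (auto simp: Up_def Down_def)
  ultimately show ?thesis by blast
qed

lemma toeplitz_degree_mirror_pairs:
  fixes n m :: nat and D :: "nat \<Rightarrow> nat"
  assumes m: "m = (n - 1) div 2"
    and L: "L \<subseteq> {1..m}" and R: "R \<subseteq> {1..m}" and M: "M \<subseteq> {m<..<n-m}"
    and sym: "\<forall>i \<in> {1..n}. D i = D (n - i + 1)"
    and half_step: "\<And>i. i \<in> {1..m} \<Longrightarrow> int (D (i + 1)) - int (D i) = of_bool (i \<in> L) - of_bool (i \<in> R)"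
    and D1: "D 1 = card L + card R + card M"
  defines "T \<equiv> L \<union> (\<lambda>i. n - i) ` R \<union> M"
  shows "T \<subseteq> {1..n-1}" and "\<And>i. i \<in> {1..n} \<Longrightarrow> toeplitz_degree n T i = D i"
proof -
  note T = split_mirror_pairs_of_union[OF m L R M, folded T_def]
  show "T \<subseteq> {1..n-1}" by (fact T(1))
  have "D 1 = card T"
    using D1 card_split_mirror_pairs[OF T(1) m] T(2-4) by simp
  moreover have "int (D (Suc i)) = int (D i) + of_bool (i \<in> T) - of_bool (n - i \<in> T)"
    if "1 \<le> i" "i < n" for i
  proof -
    let ?f = "\<lambda>i. int (D (i + 1)) - int (D i)"
    let ?g = "\<lambda>i. of_bool (i \<in> T) - of_bool (n - i \<in> T) :: int"
    have "?f i = ?g i"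
    proof (rule eq_on_half_if_antisymmetric[of n ?f ?g])
      fix j assume j: "j \<in> {1..n-1}"
      then have "j \<in> {1..n}" "j + 1 \<in> {1..n}" by auto
      then have "D j = D (n - j + 1)" "D (j + 1) = D (n - (j + 1) + 1)" using sym by blast+
      moreover have "n - (n - j) = j" "n - (j + 1) + 1 = n - j" using j by auto
      ultimately show "?f (n - j) = - ?f j" "?g (n - j) = - ?g j" by simp_all
    next
      fix j assume j: "j \<in> {1..(n - 1) div 2}"
      with m T(2,3) have "j \<in> T \<longleftrightarrow> j \<in> L" "n - j \<in> T \<longleftrightarrow> j \<in> R" by blast+
      with half_step j m show "?f j = ?g j" by simp
    qed (use that in auto)
    then show ?thesis by simp
  qed
  ultimately show "toeplitz_degree n T i = D i" if "i \<in> {1..n}" for i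
    by (rule toeplitz_degree_eqI[OF T(1)]) (use that in auto)
qed

lemma toeplitz_degrees_if_profile:
  assumes "toeplitz_profile n D"
  shows "\<exists>T \<subseteq> {1..n-1}. \<forall>i \<in> {1..n}. toeplitz_degree n T i = D i"
proof -
  define m where "m = (n - 1) div 2"
  define s where "s = card {i \<in> {1..m}. D (i + 1) \<noteq> D i}"
  have step: "\<forall>i \<in> {1..n-1}. \<bar>int (D (i + 1)) - int (D i)\<bar> \<le> 1"
    and sym: "\<forall>i \<in> {1..n}. D i = D (n - i + 1)"
    and s_le: "s \<le> D 1" and le_s: "D 1 \<le> n - 1 - s"
    and parity: "odd n \<longrightarrow> (even (D 1) \<longleftrightarrow> even s)"
    using assms unfolding toeplitz_profile_def Let_def m_def[symmetric] s_def[symmetric] by blast+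
  have bounds: "2 * m \<le> n - 1" "n - 1 \<le> 2 * m + 1" by (auto simp: m_def)
  have "{i \<in> {1..m}. int (D (i + 1)) - int (D i) \<noteq> 0} = {i \<in> {1..m}. D (i + 1) \<noteq> D i}"
    by auto
  moreover have "\<forall>i \<in> {1..m}. \<bar>int (D (i + 1)) - int (D i)\<bar> \<le> 1" using step bounds by auto
  moreover have "(D 1 - s) div 2 + s \<le> card {1..m}" using s_le le_s bounds by simp
  ultimately obtain L R where LR: "L \<subseteq> {1..m}" "R \<subseteq> {1..m}"
    and card_LR: "card L + card R = s + 2 * ((D 1 - s) div 2)"
    and half_step: "\<And>i. i \<in> {1..m} \<Longrightarrow> int (D (i + 1)) - int (D i) = of_bool (i \<in> L) - of_bool (i \<in> R)"
    using indicator_diff_representation[of "{1..m}" "\<lambda>i. int (D (i + 1)) - int (D i)" "(D 1 - s) div 2"]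
    unfolding s_def by auto
  \<comment> \<open>By (d), \<open>D 1 - s\<close> can only be odd for even \<open>n\<close>, where \<open>{m<..<n-m} = {n div 2}\<close>.\<close>
  define M where "M = (if odd (D 1 - s) then {m<..<n-m} else {})"
  have card_M: "card M = (D 1 - s) mod 2"
  proof (cases "odd (D 1 - s)")
    case True
    with parity s_le have "even n" by auto
    moreover from True have "s < D 1" by (cases "s < D 1") auto
    with le_s have "n \<ge> 2" by linarith
    ultimately have "n = 2 * m + 2" unfolding m_def by presburger
    with True have "card M = 1" by (simp add: M_def)
    with True show ?thesis by (metis odd_iff_mod_2_eq_one)
  qed (simp add: M_def)
  have M: "M \<subseteq> {m<..<n-m}" by (simp add: M_def)
  have "D 1 = card L + card R + card M"
    using card_LR card_M s_le div_mult_mod_eq[of "D 1 - s" 2] by linarith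
  note realised = toeplitz_degree_mirror_pairs[OF m_def LR M sym half_step this]
  show ?thesis by (intro exI[of _ "L \<union> (\<lambda>i. n - i) ` R \<union> M"] conjI ballI realised)
qed

lemma toeplitz_degrees_iff_profile:
  assumes "n \<ge> 1"
  shows "(\<exists>T \<subseteq> {1..n-1}. \<forall>i \<in> {1..n}. toeplitz_degree n T i = D i) \<longleftrightarrow> toeplitz_profile n D"
proof
  assume "\<exists>T \<subseteq> {1..n-1}. \<forall>i \<in> {1..n}. toeplitz_degree n T i = D i"
  then obtain T where "T \<subseteq> {1..n-1}" "\<forall>i \<in> {1..n}. toeplitz_degree n T i = D i" by blast
  with toeplitz_profile_degree toeplitz_profile_cong[OF assms] show "toeplitz_profile n D" by metis
qed (rule toeplitz_degrees_if_profile)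

lemma mset_map_upt_eq_iff_permutes:
  assumes "length xs = n"
  shows "mset (map f [1..<n+1]) = mset xs \<longleftrightarrow>
    (\<exists>\<pi>. \<pi> permutes {1..n} \<and> (\<forall>i \<in> {1..n}. f i = xs ! (\<pi> i - 1)))"
proof -
  have mset_upt_1: "mset (map g [1..<n+1]) = image_mset g (mset_set {1..n})" for g :: "nat \<Rightarrow> 'a"
    by (simp add: atLeastLessThanSuc_atLeastAtMost del: upt_Suc)
  have "map (\<lambda>i. xs ! (i - 1)) [1..<n+1] = xs"
    unfolding assms[symmetric] by (simp add: map_Suc_upt[symmetric] comp_def map_nth del: upt_Suc)
  then have "mset xs = image_mset (\<lambda>i. xs ! (i - 1)) (mset_set {1..n})"
    using mset_upt_1 by metis
  moreover have "image_mset f (mset_set {1..n}) = image_mset (\<lambda>i. xs ! (i - 1)) (mset_set {1..n})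
      \<longleftrightarrow> (\<exists>\<pi>. \<pi> permutes {1..n} \<and> (\<forall>i \<in> {1..n}. f i = xs ! (\<pi> i - 1)))"
  proof
    assume "image_mset f (mset_set {1..n}) = image_mset (\<lambda>i. xs ! (i - 1)) (mset_set {1..n})"
    from image_mset_eq_implies_permutes[OF finite_atLeastAtMost this]
    show "\<exists>\<pi>. \<pi> permutes {1..n} \<and> (\<forall>i \<in> {1..n}. f i = xs ! (\<pi> i - 1))" by blast
  next
    assume "\<exists>\<pi>. \<pi> permutes {1..n} \<and> (\<forall>i \<in> {1..n}. f i = xs ! (\<pi> i - 1))"
    then obtain \<pi> where "\<pi> permutes {1..n}" "\<forall>i \<in> {1..n}. f i = xs ! (\<pi> i - 1)" by blast
    from permutes_implies_image_mset_eq[OF this(1), of f "\<lambda>i. xs ! (i - 1)"] this(2)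
    show "image_mset f (mset_set {1..n}) = image_mset (\<lambda>i. xs ! (i - 1)) (mset_set {1..n})" by simp
  qed
  ultimately show ?thesis by (simp only: mset_upt_1)
qed

lemma rev_sort_eq_iff_mset_eq:
  fixes xs ys :: "'a::linorder list"
  assumes "sorted_wrt (\<ge>) ys"
  shows "rev (sort xs) = ys \<longleftrightarrow> mset xs = mset ys"
proof
  assume "mset xs = mset ys"
  moreover have "sorted (rev ys)" using assms by (simp add: sorted_wrt_rev)
  ultimately have "sort xs = rev ys" by (intro properties_for_sort) simp_all
  then show "rev (sort xs) = ys" by simp
qed auto

theorem theorem4p4:
  fixes n :: nat and d :: "nat list"
  assumes "n \<ge> 2" and "length d = n" and "sorted_wrt (\<ge>) d"
  shows "is_toeplitz_degree_sequence n d \<longleftrightarrow>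
    (\<exists>\<pi>. \<pi> permutes {1..n} \<and>
       (let D = (\<lambda>i. d ! (\<pi> i - 1));
            m = (n - 1) div 2;
            s = card {i \<in> {1..m}. D (i + 1) \<noteq> D i}
        in (\<forall>i \<in> {1..n-1}. \<bar>int (D (i + 1)) - int (D i)\<bar> \<le> 1) \<and>
           (\<forall>i \<in> {1..n}. D i = D (n - i + 1)) \<and>
           s \<le> D 1 \<and> D 1 \<le> n - 1 - s \<and>
           (odd n \<longrightarrow> (even (D 1) \<longleftrightarrow> even s))))"
proof -
  have "is_toeplitz_degree_sequence n d \<longleftrightarrow>
      (\<exists>T \<subseteq> {1..n-1}. mset (map (toeplitz_degree n T) [1..<n+1]) = mset d)"
    unfolding is_toeplitz_degree_sequence_def toeplitz_degree_sequence_def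
    using rev_sort_eq_iff_mset_eq[OF assms(3)] by metis
  also have "\<dots> \<longleftrightarrow> (\<exists>\<pi>. \<pi> permutes {1..n} \<and>
      (\<exists>T \<subseteq> {1..n-1}. \<forall>i \<in> {1..n}. toeplitz_degree n T i = d ! (\<pi> i - 1)))"
    unfolding mset_map_upt_eq_iff_permutes[OF assms(2)] by blast
  also have "\<dots> \<longleftrightarrow> (\<exists>\<pi>. \<pi> permutes {1..n} \<and> toeplitz_profile n (\<lambda>i. d ! (\<pi> i - 1)))"
    using toeplitz_degrees_iff_profile assms(1) by simp
  finally show ?thesis unfolding toeplitz_profile_def Let_def .
qed

end
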